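(* Let $n\ge2$, let $f$ be a $\gamma_{tr2}(P_2\square P_n)$-function such that the number of vertices $v$ with $f(v)=\emptyset$ is minimum among all $\gamma_{tr2}(P_2\square P_n)$-functions, and let $a_j=|f((0,j))|+|f((1,j))|$ for $j\in\{0,\dots,n-1\}$. Then $a_j+a_{j+1}\ge3$ for every $j\in\{0,1,\dots,n-2\}$.
   Context: $P_m$ denotes the directed path with vertex set $\{0,1,\dots,m-1\}$ and arcs $(i,i+1)$ for $0\le i\le m-2$. The Cartesian product $D_1\square D_2$ has vertex set $V(D_1)\times V(D_2)$, with an arc from $(x_1,y_1)$ to $(x_2,y_2)$ iff either $(x_1,x_2)$ is an arc of $D_1$ and $y_1=y_2$, or $x_1=x_2$ and $(y_1,y_2)$ is an arc of $D_2$. For a digraph $D$ and positive integer $k$, a $k$-rainbow dominating function on $D$ is $f:V(D)\to\mathcal P(\{1,\dots,k\})$ such that every $v$ with $f(v)=\emptyset$ satisfies $\bigcup_{u\in N^-(v)}f(u)=\{1,\dots,k\}$, where $N^-(v)$ is the set of in-neighbors of $v$; its weight is $\sum_v|f(v)|$. It is total if additionally the subdigraph induced by $\{v:f(v)\ne\emptyset\}$ has no isolated vertex (a vertex with neither in- nor out-neighbors in it). $\gamma_{trk}(D)$ is the minimum weight of a total $k$-rainbow dominating function, and a $\gamma_{trk}(D)$-function is one attaining it. *)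

theory Defs
  imports Main
begin

type_synonym 'v digraph = "'v set \<times> ('v \<times> 'v) set"

definition verts :: "'v digraph \<Rightarrow> 'v set" where "verts D = fst D"
definition arcs :: "'v digraph \<Rightarrow> ('v \<times> 'v) set" where "arcs D = snd D"

definition dipath :: "nat \<Rightarrow> nat digraph" where
  "dipath m = ({0..<m}, {(i, i+1) | i. i + 1 < m})"

definition cart_prod :: "'a digraph \<Rightarrow> 'b digraph \<Rightarrow> ('a \<times> 'b) digraph" where
  "cart_prod D1 D2 = (verts D1 \<times> verts D2,
     {((x1, y), (x2, y)) | x1 x2 y. (x1, x2) \<in> arcs D1 \<and> y \<in> verts D2}
   \<union> {((x, y1), (x, y2)) | x y1 y2. x \<in> verts D1 \<and> (y1, y2) \<in> arcs D2})"

definition in_nbrs :: "'v digraph \<Rightarrow> 'v \<Rightarrow> 'v set" where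
  "in_nbrs D v = {u. (u, v) \<in> arcs D}"

definition rainbow_dom :: "nat \<Rightarrow> 'v digraph \<Rightarrow> ('v \<Rightarrow> nat set) \<Rightarrow> bool" where
  "rainbow_dom k D f \<longleftrightarrow>
     (\<forall>v \<in> verts D. f v \<subseteq> {1..k}) \<and>
     (\<forall>v \<in> verts D. f v = {} \<longrightarrow> (\<Union>u \<in> in_nbrs D v. f u) = {1..k})"

text \<open>Total: the subdigraph induced by vertices with nonempty label has no isolated vertex.\<close>
definition total_rainbow_dom :: "nat \<Rightarrow> 'v digraph \<Rightarrow> ('v \<Rightarrow> nat set) \<Rightarrow> bool" where
  "total_rainbow_dom k D f \<longleftrightarrow> rainbow_dom k D f \<and>
     (\<forall>v \<in> verts D. f v \<noteq> {} \<longrightarrow>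
        (\<exists>u \<in> verts D. f u \<noteq> {} \<and> ((u, v) \<in> arcs D \<or> (v, u) \<in> arcs D)))"

definition rd_weight :: "'v digraph \<Rightarrow> ('v \<Rightarrow> nat set) \<Rightarrow> nat" where
  "rd_weight D f = (\<Sum>v \<in> verts D. card (f v))"

definition gamma_trk :: "nat \<Rightarrow> 'v digraph \<Rightarrow> nat" where
  "gamma_trk k D = (LEAST w. \<exists>f. total_rainbow_dom k D f \<and> rd_weight D f = w)"

definition is_gamma_trk_function :: "nat \<Rightarrow> 'v digraph \<Rightarrow> ('v \<Rightarrow> nat set) \<Rightarrow> bool" where
  "is_gamma_trk_function k D f \<longleftrightarrow>
     total_rainbow_dom k D f \<and> rd_weight D f = gamma_trk k D"

definition num_empty :: "'v digraph \<Rightarrow> ('v \<Rightarrow> nat set) \<Rightarrow> nat" where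
  "num_empty D f = card {v \<in> verts D. f v = {}}"

end

theory Submission
  imports Defs
begin

text \<open>Suppose columns \<open>j\<close> and \<open>j + 1\<close> of \<open>P\<^sub>2 \<box> P\<^sub>n\<close> carry weight at most 2. Domination of
  \<open>(0, j + 1)\<close> and \<open>(1, j + 1)\<close> forces \<open>f (0, j) = {}\<close> and \<open>f (0, j + 1) \<noteq> {}\<close>; then \<open>(0, j)\<close>
  must be dominated by its only in-neighbour, so \<open>j > 0\<close> and \<open>f (0, j - 1) = {1, 2}\<close>, and totality
  gives \<open>f (1, j - 1) \<noteq> {}\<close>. Relabelling \<open>(0, j - 1)\<close> and \<open>(0, j)\<close> both with \<open>{1}\<close> yields a
  total 2-rainbow dominating function of the same weight with fewer empty vertices.\<close>


lemma rd_weight_fun_upd: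
  assumes "finite (verts D)" and "v \<in> verts D"
  shows "rd_weight D (f(v := A)) + card (f v) = rd_weight D f + card A"
proof -
  have rest: "(\<Sum>w\<in>verts D - {v}. card ((f(v := A)) w)) = (\<Sum>w\<in>verts D - {v}. card (f w))"
    by (rule sum.cong) auto
  show ?thesis
    unfolding rd_weight_def sum.remove[OF assms, of "\<lambda>w. card ((f(v := A)) w)"]
      sum.remove[OF assms, of "\<lambda>w. card (f w)"] rest
    by simp
qed

lemma rd_weight_fun_upd2:
  assumes "finite (verts D)" and "u \<in> verts D" and "v \<in> verts D" and "u \<noteq> v"
  shows "rd_weight D (f(u := A, v := B)) + card (f u) + card (f v) = rd_weight D f + card A + card B"
  using rd_weight_fun_upd[OF assms(1,3), of "f(u := A)" B] rd_weight_fun_upd[OF assms(1,2), of f A] assms(4)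
  by simp

lemma num_empty_fun_upd2_less:
  assumes "finite (verts D)" and "v \<in> verts D" and "f v = {}" and "A \<noteq> {}" and "B \<noteq> {}"
  shows "num_empty D (f(u := A, v := B)) < num_empty D f"
  unfolding num_empty_def using assms by (intro psubset_card_mono) auto

lemma rainbow_dom_finite_label:
  "rainbow_dom k D f \<Longrightarrow> v \<in> verts D \<Longrightarrow> finite (f v)"
  unfolding rainbow_dom_def by (meson finite_atLeastAtMost finite_subset)

lemma rainbow_dom_empty_dominated:
  "rainbow_dom k D f \<Longrightarrow> v \<in> verts D \<Longrightarrow> f v = {} \<Longrightarrow> (\<Union>u\<in>in_nbrs D v. f u) = {1..k}"
  unfolding rainbow_dom_def by blast

lemma rainbow_dom_le_sum_in_nbrs:
  assumes "rainbow_dom k D f" and "v \<in> verts D" and "f v = {}" and "finite (in_nbrs D v)"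
  shows "k \<le> (\<Sum>u\<in>in_nbrs D v. card (f u))"
proof -
  have "(\<Union>u\<in>in_nbrs D v. f u) = {1..k}"
    using rainbow_dom_empty_dominated[OF assms(1-3)] .
  then show ?thesis
    using card_UN_le[OF assms(4), of f] by simp
qed

abbreviation ladder :: "nat \<Rightarrow> (nat \<times> nat) digraph" where
  "ladder n \<equiv> cart_prod (dipath 2) (dipath n)"

lemma verts_ladder: "verts (ladder n) = {0..<2} \<times> {0..<n}"
  by (simp add: cart_prod_def verts_def dipath_def)

lemma arcs_ladder:
  "((a, b), (c, d)) \<in> arcs (ladder n) \<longleftrightarrow>
     d < n \<and> ((a = 0 \<and> c = 1 \<and> d = b) \<or> (c = a \<and> a < 2 \<and> d = Suc b))"
  by (auto simp add: cart_prod_def verts_def arcs_def dipath_def)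

lemma mem_in_nbrs_ladder:
  "(a, b) \<in> in_nbrs (ladder n) (c, d) \<longleftrightarrow>
     d < n \<and> ((a = 0 \<and> c = 1 \<and> d = b) \<or> (c = a \<and> a < 2 \<and> d = Suc b))"
  by (simp add: in_nbrs_def arcs_ladder)

lemma in_nbrs_ladder:
  "in_nbrs (ladder n) (0, 0) = {}"
  "Suc j < n \<Longrightarrow> in_nbrs (ladder n) (0, Suc j) = {(0, j)}"
  "Suc j < n \<Longrightarrow> in_nbrs (ladder n) (1, Suc j) = {(0, Suc j), (1, j)}"
  by (auto simp: mem_in_nbrs_ladder)

lemma rainbow_dom_ladder_empty_iff:
  assumes "rainbow_dom k (ladder n) f" and "a < 2" and "b < n"
  shows "f (a, b) = {} \<longleftrightarrow> card (f (a, b)) = 0"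
  using rainbow_dom_finite_label[OF assms(1)] assms(2,3) by (simp add: verts_ladder)

lemma light_columns_top:
  assumes f: "rainbow_dom 2 (ladder n) f" and j: "Suc j < n"
    and light: "card (f (0, j)) + card (f (1, j)) + card (f (0, Suc j)) + card (f (1, Suc j)) \<le> 2"
  shows "f (0, Suc j) \<noteq> {}" and "f (0, j) = {}"
proof -
  have vert: "(a, b) \<in> verts (ladder n)" if "a < 2" "b < n" for a b
    using that by (simp add: verts_ladder)
  have empty_iff: "f (a, b) = {} \<longleftrightarrow> card (f (a, b)) = 0" if "a < 2" "b < n" for a b
    using rainbow_dom_ladder_empty_iff[OF f that] .
  have top_right: "card (f (0, Suc j)) = 0 \<Longrightarrow> 2 \<le> card (f (0, j))"
    using rainbow_dom_le_sum_in_nbrs[OF f vert[of 0 "Suc j"]] empty_iff[of 0 "Suc j"] j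
    by (simp add: in_nbrs_ladder)
  have bottom_right: "card (f (1, Suc j)) = 0 \<Longrightarrow> 2 \<le> card (f (0, Suc j)) + card (f (1, j))"
    using rainbow_dom_le_sum_in_nbrs[OF f vert[of 1 "Suc j"]] empty_iff[of 1 "Suc j"] j
    unfolding in_nbrs_ladder(3)[OF j] by simp
  have "card (f (0, Suc j)) \<noteq> 0" and "card (f (0, j)) = 0"
    using top_right bottom_right light by arith+
  then show "f (0, Suc j) \<noteq> {}" and "f (0, j) = {}"
    using empty_iff j by auto
qed

lemma total_rainbow_dom_ladder_neighbour:
  assumes "total_rainbow_dom k (ladder n) f" and "Suc i < n" and "f (1, Suc i) \<noteq> {}"
  shows "f (0, Suc i) \<noteq> {} \<or> f (1, i) \<noteq> {} \<or> (Suc (Suc i) < n \<and> f (1, Suc (Suc i)) \<noteq> {})"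
proof -
  have "(1, Suc i) \<in> verts (ladder n)"
    using assms(2) by (simp add: verts_ladder)
  then obtain u where "f u \<noteq> {}"
    and "(u, (1, Suc i)) \<in> arcs (ladder n) \<or> ((1, Suc i), u) \<in> arcs (ladder n)"
    using assms(1,3) unfolding total_rainbow_dom_def by blast
  then show ?thesis
    by (cases u) (auto simp: arcs_ladder)
qed

lemma light_columns_predecessor:
  assumes f: "total_rainbow_dom 2 (ladder n) f" and j: "Suc j < n"
    and light: "card (f (0, j)) + card (f (1, j)) + card (f (0, Suc j)) + card (f (1, Suc j)) \<le> 2"
  shows "\<exists>i. j = Suc i \<and> f (0, i) = {1..2} \<and> f (1, i) \<noteq> {}"
proof -
  have dom: "rainbow_dom 2 (ladder n) f"
    using f by (simp add: total_rainbow_dom_def)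
  have dominated: "(\<Union>u\<in>in_nbrs (ladder n) (a, b). f u) = {1..2}"
    if "a < 2" "b < n" "f (a, b) = {}" for a b
    using rainbow_dom_empty_dominated[OF dom _ that(3)] that(1,2) by (simp add: verts_ladder)
  have top_right: "f (0, Suc j) \<noteq> {}" and top: "f (0, j) = {}"
    using light_columns_top[OF dom j light] by auto
  obtain i where i: "j = Suc i"
  proof (cases j)
    case 0
    then show ?thesis
      using dominated[of 0 0] top j by (simp add: in_nbrs_ladder)
  qed
  have i_n: "Suc i < n"
    using i j by simp
  have "f (0, i) = {1..2}"
    using dominated[of 0 j] top j unfolding i in_nbrs_ladder(2)[OF i_n] by simp
  moreover have "f (1, i) \<noteq> {}"
  proof (cases "f (1, j) = {}")
    case True
    then show ?thesis
      using dominated[of 1 j] top j unfolding i in_nbrs_ladder(3)[OF i_n] by simp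
  next
    case False
    have "card (f (1, j)) \<noteq> 0" and "card (f (0, Suc j)) \<noteq> 0"
      using False top_right rainbow_dom_ladder_empty_iff[OF dom, of 1 j]
        rainbow_dom_ladder_empty_iff[OF dom, of 0 "Suc j"] j
      by auto
    then have "f (1, Suc j) = {}"
      using light rainbow_dom_ladder_empty_iff[OF dom, of 1 "Suc j"] j by simp
    then show ?thesis
      using total_rainbow_dom_ladder_neighbour[OF f i_n] False top unfolding i by blast
  qed
  ultimately show ?thesis
    using i by blast
qed

lemma total_rainbow_dom_ladder_fill_gap:
  assumes f: "total_rainbow_dom 2 (ladder n) f" and i: "Suc (Suc i) < n"
    and below: "f (1, i) \<noteq> {}" and gap: "f (0, Suc i) = {}" and next_nonempty: "f (0, Suc (Suc i)) \<noteq> {}"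
  shows "total_rainbow_dom 2 (ladder n) (f((0, i) := {1}, (0, Suc i) := {1}))"
proof -
  define g where "g = f((0, i) := {1}, (0, Suc i) := {1})"
  have dom: "rainbow_dom 2 (ladder n) f"
    using f by (simp add: total_rainbow_dom_def)
  have g_nonempty: "g v \<noteq> {}" if "f v \<noteq> {}" for v
    using that by (simp add: g_def)
  have labels: "g v \<subseteq> {1..2}" if "v \<in> verts (ladder n)" for v
    using dom that unfolding rainbow_dom_def g_def by auto
  have dominated: "(\<Union>u\<in>in_nbrs (ladder n) v. g u) = {1..2}"
    if v: "v \<in> verts (ladder n)" and gv: "g v = {}" for v
  proof -
    have fv: "f v = {}" and v_ne: "v \<noteq> (0, i)" "v \<noteq> (0, Suc i)"
      using gv by (auto simp: g_def split: if_splits)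
    show ?thesis
    proof (cases "v = (1, Suc i)")
      case True
      have "f (1, i) = {1..2}"
        using rainbow_dom_empty_dominated[OF dom v fv] gap i
        unfolding True in_nbrs_ladder(3)[OF Suc_lessD[OF i]] by (simp add: insert_absorb)
      then show ?thesis
        unfolding True in_nbrs_ladder(3)[OF Suc_lessD[OF i]] by (simp add: g_def insert_absorb)
    next
      case False
      obtain a b where v_ab: "v = (a, b)"
        by fastforce
      have "(0, i) \<notin> in_nbrs (ladder n) v"
        using v_ne fv below unfolding v_ab mem_in_nbrs_ladder by auto
      moreover have "(0, Suc i) \<notin> in_nbrs (ladder n) v"
        using False fv next_nonempty unfolding v_ab mem_in_nbrs_ladder by auto
      ultimately have "(\<Union>u\<in>in_nbrs (ladder n) v. g u) = (\<Union>u\<in>in_nbrs (ladder n) v. f u)"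
        unfolding g_def by (intro SUP_cong) auto
      then show ?thesis
        using rainbow_dom_empty_dominated[OF dom v fv] by simp
    qed
  qed
  have adjacent: "\<exists>u\<in>verts (ladder n). g u \<noteq> {} \<and> ((u, v) \<in> arcs (ladder n) \<or> (v, u) \<in> arcs (ladder n))"
    if v: "v \<in> verts (ladder n)" and gv: "g v \<noteq> {}" for v
  proof -
    consider "v = (0, i)" | "v = (0, Suc i)" | "f v \<noteq> {}"
      using gv by (auto simp: g_def split: if_splits)
    then show ?thesis
    proof cases
      case 1
      have "(1, i) \<in> verts (ladder n)" and "(v, (1, i)) \<in> arcs (ladder n)"
        using 1 i by (simp_all add: verts_ladder arcs_ladder)
      then show ?thesis
        using g_nonempty[OF below] by blast
    next
      case 2
      have "(0, Suc (Suc i)) \<in> verts (ladder n)" and "(v, (0, Suc (Suc i))) \<in> arcs (ladder n)"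
        using 2 i by (simp_all add: verts_ladder arcs_ladder)
      then show ?thesis
        using g_nonempty[OF next_nonempty] by blast
    next
      case 3
      then obtain u where "u \<in> verts (ladder n)" "f u \<noteq> {}"
        and "(u, v) \<in> arcs (ladder n) \<or> (v, u) \<in> arcs (ladder n)"
        using f v unfolding total_rainbow_dom_def by blast
      then show ?thesis
        using g_nonempty by blast
    qed
  qed
  have "total_rainbow_dom 2 (ladder n) g"
    unfolding total_rainbow_dom_def rainbow_dom_def
    by (intro conjI ballI impI labels dominated adjacent)
  then show ?thesis
    unfolding g_def .
qed

theorem lemma4p2:
  fixes n :: nat and f :: "nat \<times> nat \<Rightarrow> nat set"
  assumes "n \<ge> 2"
    and "is_gamma_trk_function 2 (cart_prod (dipath 2) (dipath n)) f"
    and "\<forall>g. is_gamma_trk_function 2 (cart_prod (dipath 2) (dipath n)) g \<longrightarrow>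
           num_empty (cart_prod (dipath 2) (dipath n)) f \<le> num_empty (cart_prod (dipath 2) (dipath n)) g"
  shows "\<forall>j. j + 1 < n \<longrightarrow>
           (card (f (0, j)) + card (f (1, j))) + (card (f (0, j + 1)) + card (f (1, j + 1))) \<ge> 3"
proof (intro allI impI, rule ccontr)
  fix j
  assume "j + 1 < n" and "\<not> 3 \<le> card (f (0, j)) + card (f (1, j)) + (card (f (0, j + 1)) + card (f (1, j + 1)))"
  then have j: "Suc j < n"
    and light: "card (f (0, j)) + card (f (1, j)) + card (f (0, Suc j)) + card (f (1, Suc j)) \<le> 2"
    by simp_all
  have total: "total_rainbow_dom 2 (ladder n) f"
    using assms(2) by (simp add: is_gamma_trk_function_def)
  then have dom: "rainbow_dom 2 (ladder n) f"
    by (simp add: total_rainbow_dom_def)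
  obtain i where i: "j = Suc i" and full: "f (0, i) = {1..2}" and below: "f (1, i) \<noteq> {}"
    using light_columns_predecessor[OF total j light] by blast
  have next_nonempty: "f (0, Suc (Suc i)) \<noteq> {}" and gap: "f (0, Suc i) = {}"
    using light_columns_top[OF dom j light] unfolding i .
  define g where "g = f((0, i) := {1}, (0, Suc i) := {1})"
  have "total_rainbow_dom 2 (ladder n) g"
    using total_rainbow_dom_ladder_fill_gap[OF total _ below gap next_nonempty] i j
    by (simp add: g_def)
  moreover have "rd_weight (ladder n) g = rd_weight (ladder n) f"
    using rd_weight_fun_upd2[of "ladder n" "(0, i)" "(0, Suc i)" f "{1}" "{1}"] full gap i j
    by (simp add: g_def verts_ladder)
  ultimately have "is_gamma_trk_function 2 (ladder n) g"
    using assms(2) by (simp add: is_gamma_trk_function_def)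
  then have "num_empty (ladder n) f \<le> num_empty (ladder n) g"
    using assms(3) by blast
  moreover have "num_empty (ladder n) g < num_empty (ladder n) f"
    using num_empty_fun_upd2_less[of "ladder n" "(0, Suc i)" f "{1}" "{1}" "(0, i)"] gap i j
    by (simp add: g_def verts_ladder)
  ultimately show False
    by simp
qed

end
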